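(* Let $\mathcal{H}$ be a complex separable Hilbert space and $\mathcal{E}(\mathcal{H})$ its set of effects. For $A\in\mathcal{E}(\mathcal{H})$ with spectrum $\sigma_A$ let $M=\max\sigma_A$, $m=\min\sigma_A$, $a_0=\tfrac12(M+m)$ and $\delta=\min_{\lambda\in\sigma_A}(\lambda-a_0)^2$. Define $$\mathcal{F}_5(A):=\sqrt{\tfrac12(a_0^2-\delta)+\tfrac12Mm}+\sqrt{\tfrac12((1-a_0)^2-\delta)+\tfrac12(1-M)(1-m)},$$ $$\mathcal{B}_5(A):=\sqrt{\tfrac12(a_0^2-\delta)+\tfrac12Mm}-\sqrt{\tfrac12((1-a_0)^2-\delta)+\tfrac12(1-M)(1-m)}.$$ Then $\mathcal{F}_5$ is an unsharpness measure on $\mathcal{E}(\mathcal{H})$ and $\mathcal{B}_5$ is a bias measure on $\mathcal{E}(\mathcal{H})$.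
   Context: An effect is a selfadjoint bounded operator $A$ with $\mathbb{O}\le A\le I$; $A'=I-A$. An effect is trivial if $A=\lambda I$, $\lambda\in[0,1]$; a nontrivial projection is a projection other than $\mathbb{O},I$. A sharpness measure is a function $\mathcal{S}:\mathcal{E}(\mathcal{H})\to\mathbb{R}$ with: (S1) $0\le\mathcal{S}(A)\le1$; (S2) $\mathcal{S}(A)=0$ iff $A$ is trivial; (S3) $\mathcal{S}(A)=1$ iff $A$ is a nontrivial projection; (S4) $\mathcal{S}(A')=\mathcal{S}(A)$; (S5) $\mathcal{S}(CAC^{-1})=\mathcal{S}(A)$ for every invertible bounded $C$ such that $CAC^{-1}$ is an effect; (S6) operator-norm continuity. A function $\mathcal{F}$ is an unsharpness measure if $A\mapsto 1-\mathcal{F}(A)$ is a sharpness measure (so $\mathcal{F}(A)=1$ iff $A$ is trivial and $\mathcal{F}(A)=0$ iff $A$ is a nontrivial projection). A bias measure is a function $\mathcal{B}:\mathcal{E}(\mathcal{H})\to\mathbb{R}$ with: (B1) $-1\le\mathcal{B}(A)\le1$; (B2) $\mathcal{B}(A)=0$ iff $\tfrac12(\max\sigma_A+\min\sigma_A)=\tfrac12$; (B3) $\mathcal{B}(A)=1$ iff $A=I$, and $\mathcal{B}(A)=-1$ iff $A=\mathbb{O}$; (B4) $\mathcal{B}(A')=-\mathcal{B}(A)$; (B5) $\mathcal{B}(CAC^{-1})=\mathcal{B}(A)$ for every invertible bounded $C$ such that $CAC^{-1}$ is an effect; (B6) operator-norm continuity. *)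

theory Defs
  imports "HOL-Analysis.Analysis"
begin

text \<open>A complex Hilbert space is modelled as a real Hilbert space (type class
real_inner + complete_space, the real inner product being the real part of the
complex one) together with a complex structure J (multiplication by i), which
is a real-linear isometric operator with J o J = -I.\<close>

definition complex_structure :: "('a::real_inner \<Rightarrow>\<^sub>L 'a) \<Rightarrow> bool" where
  "complex_structure J \<longleftrightarrow>
     (\<forall>x. J (J x) = - x) \<and> (\<forall>x y. inner (J x) (J y) = inner x y)"

text \<open>Complex inner product, linear in the second argument.\<close>
definition cinner :: "('a::real_inner \<Rightarrow>\<^sub>L 'a) \<Rightarrow> 'a \<Rightarrow> 'a \<Rightarrow> complex" where
  "cinner J x y = Complex (inner x y) (inner (J x) y)"

definition clinear_op :: "('a::real_normed_vector \<Rightarrow>\<^sub>L 'a) \<Rightarrow> ('a \<Rightarrow>\<^sub>L 'a) \<Rightarrow> bool" where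
  "clinear_op J A \<longleftrightarrow> (\<forall>x. A (J x) = J (A x))"

definition cscal :: "('a::real_normed_vector \<Rightarrow>\<^sub>L 'a) \<Rightarrow> complex \<Rightarrow> ('a \<Rightarrow>\<^sub>L 'a)" where
  "cscal J c = Re c *\<^sub>R id_blinfun + Im c *\<^sub>R J"

definition selfadjoint :: "('a::real_inner \<Rightarrow>\<^sub>L 'a) \<Rightarrow> ('a \<Rightarrow>\<^sub>L 'a) \<Rightarrow> bool" where
  "selfadjoint J A \<longleftrightarrow> clinear_op J A \<and> (\<forall>x y. cinner J (A x) y = cinner J x (A y))"

text \<open>Effects: selfadjoint A with O \<le> A \<le> I (for selfadjoint A the quadratic form
  is real and equals the real inner product).\<close>
definition effects :: "('a::real_inner \<Rightarrow>\<^sub>L 'a) \<Rightarrow> ('a \<Rightarrow>\<^sub>L 'a) set" where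
  "effects J = {A. selfadjoint J A \<and> (\<forall>x. 0 \<le> inner x (A x) \<and> inner x (A x) \<le> inner x x)}"

definition invertible_op :: "('a::real_normed_vector \<Rightarrow>\<^sub>L 'a) \<Rightarrow> bool" where
  "invertible_op A \<longleftrightarrow> (\<exists>B. B o\<^sub>L A = id_blinfun \<and> A o\<^sub>L B = id_blinfun)"

definition spectrum :: "('a::real_normed_vector \<Rightarrow>\<^sub>L 'a) \<Rightarrow> ('a \<Rightarrow>\<^sub>L 'a) \<Rightarrow> complex set" where
  "spectrum J A = {c. \<not> invertible_op (A - cscal J c)}"

text \<open>Real points of the spectrum (for selfadjoint A this is the whole spectrum).\<close>
definition rspectrum :: "('a::real_normed_vector \<Rightarrow>\<^sub>L 'a) \<Rightarrow> ('a \<Rightarrow>\<^sub>L 'a) \<Rightarrow> real set" where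
  "rspectrum J A = {t. complex_of_real t \<in> spectrum J A}"

definition specmax :: "('a::real_normed_vector \<Rightarrow>\<^sub>L 'a) \<Rightarrow> ('a \<Rightarrow>\<^sub>L 'a) \<Rightarrow> real" where
  "specmax J A = Sup (rspectrum J A)"

definition specmin :: "('a::real_normed_vector \<Rightarrow>\<^sub>L 'a) \<Rightarrow> ('a \<Rightarrow>\<^sub>L 'a) \<Rightarrow> real" where
  "specmin J A = Inf (rspectrum J A)"

definition trivial_effect :: "('a::real_normed_vector \<Rightarrow>\<^sub>L 'a) \<Rightarrow> bool" where
  "trivial_effect A \<longleftrightarrow> (\<exists>l::real. 0 \<le> l \<and> l \<le> 1 \<and> A = l *\<^sub>R id_blinfun)"

definition nontrivial_projection :: "('a::real_inner \<Rightarrow>\<^sub>L 'a) \<Rightarrow> ('a \<Rightarrow>\<^sub>L 'a) \<Rightarrow> bool" where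
  "nontrivial_projection J A \<longleftrightarrow> selfadjoint J A \<and> A o\<^sub>L A = A \<and> A \<noteq> 0 \<and> A \<noteq> id_blinfun"

definition similarity_invariant ::
  "('a::real_inner \<Rightarrow>\<^sub>L 'a) \<Rightarrow> (('a \<Rightarrow>\<^sub>L 'a) \<Rightarrow> real) \<Rightarrow> bool" where
  "similarity_invariant J f \<longleftrightarrow>
     (\<forall>A\<in>effects J. \<forall>C Ci. clinear_op J C \<and> C o\<^sub>L Ci = id_blinfun \<and> Ci o\<^sub>L C = id_blinfun
        \<and> (C o\<^sub>L A o\<^sub>L Ci) \<in> effects J \<longrightarrow> f (C o\<^sub>L A o\<^sub>L Ci) = f A)"

definition sharpness_measure ::
  "('a::real_inner \<Rightarrow>\<^sub>L 'a) \<Rightarrow> (('a \<Rightarrow>\<^sub>L 'a) \<Rightarrow> real) \<Rightarrow> bool" where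
  "sharpness_measure J S \<longleftrightarrow>
     (\<forall>A\<in>effects J. 0 \<le> S A \<and> S A \<le> 1) \<and>
     (\<forall>A\<in>effects J. S A = 0 \<longleftrightarrow> trivial_effect A) \<and>
     (\<forall>A\<in>effects J. S A = 1 \<longleftrightarrow> nontrivial_projection J A) \<and>
     (\<forall>A\<in>effects J. S (id_blinfun - A) = S A) \<and>
     similarity_invariant J S \<and>
     continuous_on (effects J) S"

definition unsharpness_measure ::
  "('a::real_inner \<Rightarrow>\<^sub>L 'a) \<Rightarrow> (('a \<Rightarrow>\<^sub>L 'a) \<Rightarrow> real) \<Rightarrow> bool" where
  "unsharpness_measure J F \<longleftrightarrow> sharpness_measure J (\<lambda>A. 1 - F A)"

definition bias_measure ::
  "('a::real_inner \<Rightarrow>\<^sub>L 'a) \<Rightarrow> (('a \<Rightarrow>\<^sub>L 'a) \<Rightarrow> real) \<Rightarrow> bool" where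
  "bias_measure J B \<longleftrightarrow>
     (\<forall>A\<in>effects J. -1 \<le> B A \<and> B A \<le> 1) \<and>
     (\<forall>A\<in>effects J. B A = 0 \<longleftrightarrow> (specmax J A + specmin J A) / 2 = 1 / 2) \<and>
     (\<forall>A\<in>effects J. (B A = 1 \<longleftrightarrow> A = id_blinfun) \<and> (B A = -1 \<longleftrightarrow> A = 0)) \<and>
     (\<forall>A\<in>effects J. B (id_blinfun - A) = - B A) \<and>
     similarity_invariant J B \<and>
     continuous_on (effects J) B"

definition a0 :: "('a::real_normed_vector \<Rightarrow>\<^sub>L 'a) \<Rightarrow> ('a \<Rightarrow>\<^sub>L 'a) \<Rightarrow> real" where
  "a0 J A = (specmax J A + specmin J A) / 2"

text \<open>\<delta> = min over the spectrum of (\<lambda> - a0)^2 (the minimum is attained, spectrum compact).\<close>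
definition delta :: "('a::real_normed_vector \<Rightarrow>\<^sub>L 'a) \<Rightarrow> ('a \<Rightarrow>\<^sub>L 'a) \<Rightarrow> real" where
  "delta J A = Inf ((\<lambda>t. (t - a0 J A)^2) ` rspectrum J A)"

definition F5 :: "('a::real_normed_vector \<Rightarrow>\<^sub>L 'a) \<Rightarrow> ('a \<Rightarrow>\<^sub>L 'a) \<Rightarrow> real" where
  "F5 J A = (let M = specmax J A; m = specmin J A; a = a0 J A; d = delta J A in
     sqrt ((a^2 - d) / 2 + M * m / 2) + sqrt (((1 - a)^2 - d) / 2 + (1 - M) * (1 - m) / 2))"

definition B5 :: "('a::real_normed_vector \<Rightarrow>\<^sub>L 'a) \<Rightarrow> ('a \<Rightarrow>\<^sub>L 'a) \<Rightarrow> real" where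
  "B5 J A = (let M = specmax J A; m = specmin J A; a = a0 J A; d = delta J A in
     sqrt ((a^2 - d) / 2 + M * m / 2) - sqrt (((1 - a)^2 - d) / 2 + (1 - M) * (1 - m) / 2))"

end

theory Submission
  imports Defs
begin

text \<open>For a selfadjoint operator \<open>A\<close> the extreme points \<open>m \<le> M\<close> of the spectrum are the infimum
  and the supremum of the numerical range \<open>\<langle>x, A x\<rangle>\<close>, \<open>\<parallel>x\<parallel> = 1\<close>, and \<open>A - \<lambda>\<close> is bounded below
  by the distance from \<open>\<lambda>\<close> to the spectrum. Hence \<open>M\<close>, \<open>m\<close> and \<open>\<delta>\<close> depend continuously on \<open>A\<close>,
  only through its spectrum (so they are similarity invariant), and \<open>A \<mapsto> I - A\<close> sends
  \<open>(M, m, \<delta>)\<close> to \<open>(1 - m, 1 - M, \<delta>)\<close>, which swaps the two square roots.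
  What remains is elementary: with \<open>a = (M + m)/2\<close> the radicands \<open>p\<close> and \<open>q\<close> satisfy
  \<open>0 \<le> p \<le> a\<^sup>2\<close>, \<open>0 \<le> q \<le> (1 - a)\<^sup>2\<close> and \<open>p - q = 2a - 1\<close>, with equality cases exactly for
  \<open>M = m\<close> (trivial effects) and \<open>M = 1, m = 0, \<delta> = 1/4\<close> (spectrum \<open>{0, 1}\<close>, i.e. nontrivial
  projections).\<close>

section \<open>Invertible operators\<close>

lemma invertible_opI:
  fixes L P R :: "'a::real_normed_vector \<Rightarrow>\<^sub>L 'a"
  assumes left: "\<And>x. L (P x) = x" and right: "\<And>x. P (R x) = x"
  shows "invertible_op P"
proof -
  have "L = R"
    by (rule blinfun_eqI) (metis left right)
  then show ?thesis
    unfolding invertible_op_def using left right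
    by (intro exI[of _ R] conjI blinfun_eqI) simp_all
qed

lemma invertible_opE:
  fixes P :: "'a::real_normed_vector \<Rightarrow>\<^sub>L 'a"
  assumes "invertible_op P"
  obtains B :: "'a \<Rightarrow>\<^sub>L 'a" where "\<And>x. B (P x) = x" and "\<And>x. P (B x) = x"
  using assms unfolding invertible_op_def
  by (metis blinfun_apply_blinfun_compose blinfun_apply_id_blinfun)

lemma invertible_op_compose:
  fixes P Q :: "'a::real_normed_vector \<Rightarrow>\<^sub>L 'a"
  assumes "invertible_op P" and "invertible_op Q"
  shows "invertible_op (P o\<^sub>L Q)"
proof -
  obtain P' :: "'a \<Rightarrow>\<^sub>L 'a" where "\<And>x. P' (P x) = x" "\<And>x. P (P' x) = x"
    using assms(1) by (elim invertible_opE) blast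
  moreover obtain Q' :: "'a \<Rightarrow>\<^sub>L 'a" where "\<And>x. Q' (Q x) = x" "\<And>x. Q (Q' x) = x"
    using assms(2) by (elim invertible_opE) blast
  ultimately show ?thesis
    by (intro invertible_opI[where L = "Q' o\<^sub>L P'" and R = "Q' o\<^sub>L P'"]) simp_all
qed

lemma invertible_op_uminus:
  fixes P :: "'a::real_normed_vector \<Rightarrow>\<^sub>L 'a"
  assumes "invertible_op P"
  shows "invertible_op (- P)"
proof -
  obtain B :: "'a \<Rightarrow>\<^sub>L 'a" where "\<And>x. B (P x) = x" "\<And>x. P (B x) = x"
    using assms by (elim invertible_opE) blast
  then show ?thesis
    by (intro invertible_opI[where L = "- B" and R = "- B"]) (simp_all add: blinfun.bilinear_simps)
qed

lemma invertible_op_uminus_iff: "invertible_op (- P) \<longleftrightarrow> invertible_op P"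
  using invertible_op_uminus[of P] invertible_op_uminus[of "- P"] by auto

lemma invertible_op_compose_selfD:
  fixes U :: "'a::real_normed_vector \<Rightarrow>\<^sub>L 'a"
  assumes "invertible_op (U o\<^sub>L U)"
  shows "invertible_op U"
proof -
  obtain Q :: "'a \<Rightarrow>\<^sub>L 'a" where "\<And>x. Q ((U o\<^sub>L U) x) = x" "\<And>x. (U o\<^sub>L U) (Q x) = x"
    using assms by (elim invertible_opE) blast
  then show ?thesis
    by (intro invertible_opI[where L = "Q o\<^sub>L U" and R = "U o\<^sub>L Q"]) simp_all
qed

lemma bounded_below_surj_imp_invertible_op:
  fixes P :: "'a::real_normed_vector \<Rightarrow>\<^sub>L 'a"
  assumes c: "c > 0" and below: "\<And>x. c * norm x \<le> norm (P x)" and surj: "surj (blinfun_apply P)"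
  shows "invertible_op P"
proof -
  have "inj (blinfun_apply P)"
  proof (rule injI)
    fix x y assume "P x = P y"
    then have "c * norm (x - y) \<le> 0"
      using below[of "x - y"] by (simp add: blinfun.bilinear_simps)
    then show "x = y" using c by (simp add: mult_le_0_iff)
  qed
  define g where "g = inv (blinfun_apply P)"
  have Pg: "P (g x) = x" and gP: "g (P x) = x" for x
    unfolding g_def using surj \<open>inj (blinfun_apply P)\<close> by (simp_all add: surj_f_inv_f)
  have "bounded_linear g"
  proof (rule bounded_linear_intro[where K = "1 / c"])
    show "g (x + y) = g x + g y" for x y by (metis Pg gP blinfun.add_right)
    show "g (r *\<^sub>R x) = r *\<^sub>R g x" for r x by (metis Pg gP blinfun.scaleR_right)
    show "norm (g x) \<le> norm x * (1 / c)" for x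
      using below[of "g x"] c by (simp add: Pg field_simps)
  qed
  then show ?thesis
    by (intro invertible_opI[where L = "Blinfun g" and R = "Blinfun g"])
       (simp_all add: bounded_linear_Blinfun_apply Pg gP)
qed

text \<open>Lax--Milgram: for the step \<open>e = c / \<parallel>S\<parallel>\<^sup>2\<close> the map \<open>z \<mapsto> z - e S z\<close> is a contraction,
  so \<open>x \<mapsto> x - e (S x - y)\<close> has a fixed point, a solution of \<open>S x = y\<close>.\<close>

lemma coercive_shift_contraction:
  fixes S :: "'a::real_inner \<Rightarrow>\<^sub>L 'a"
  assumes c: "0 < c" "c \<le> norm S" and coercive: "\<And>x. c * (norm x)\<^sup>2 \<le> inner x (S x)"
  shows "norm (z - (c / (norm S)\<^sup>2) *\<^sub>R S z) \<le> sqrt (1 - c\<^sup>2 / (norm S)\<^sup>2) * norm z"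
proof -
  define K e where "K = norm S" and "e = c / K\<^sup>2"
  have "S \<noteq> 0"
    using c by auto
  have K: "0 < K" "c\<^sup>2 / K\<^sup>2 \<le> 1"
    using c \<open>S \<noteq> 0\<close> by (simp_all add: K_def power_mono divide_le_eq_1)
  have "(norm (z - e *\<^sub>R S z))\<^sup>2 = (norm z)\<^sup>2 - 2 * e * inner z (S z) + e\<^sup>2 * (norm (S z))\<^sup>2"
    by (simp only: power2_norm_eq_inner)
       (simp add: inner_diff_left inner_diff_right inner_commute algebra_simps power2_eq_square)
  also have "\<dots> \<le> (norm z)\<^sup>2 - 2 * e * (c * (norm z)\<^sup>2) + e\<^sup>2 * (K * norm z)\<^sup>2"
  proof -
    have "2 * e * (c * (norm z)\<^sup>2) \<le> 2 * e * inner z (S z)"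
      using coercive[of z] c K unfolding e_def by (intro mult_left_mono) auto
    moreover have "e\<^sup>2 * (norm (S z))\<^sup>2 \<le> e\<^sup>2 * (K * norm z)\<^sup>2"
      unfolding K_def by (intro mult_left_mono power_mono norm_blinfun) auto
    ultimately show ?thesis by linarith
  qed
  also have "\<dots> = (sqrt (1 - c\<^sup>2 / K\<^sup>2) * norm z)\<^sup>2"
    using K unfolding e_def by (simp add: power_mult_distrib field_simps power2_eq_square)
  finally have "(norm (z - e *\<^sub>R S z))\<^sup>2 \<le> (sqrt (1 - c\<^sup>2 / K\<^sup>2) * norm z)\<^sup>2" .
  moreover have "0 \<le> sqrt (1 - c\<^sup>2 / K\<^sup>2) * norm z"
    using K by simp
  ultimately show ?thesis
    unfolding K_def e_def by (rule power2_le_imp_le)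
qed

lemma coercive_imp_bounded_below:
  fixes S :: "'a::real_inner \<Rightarrow>\<^sub>L 'a"
  assumes coercive: "\<And>x. c * (norm x)\<^sup>2 \<le> inner x (S x)"
  shows "c * norm x \<le> norm (S x)"
proof (cases "x = 0")
  case False
  have "c * (norm x)\<^sup>2 \<le> norm x * norm (S x)"
    using coercive[of x] Cauchy_Schwarz_ineq2[of x "S x"] by linarith
  then show ?thesis using False by (simp add: power2_eq_square)
qed simp

lemma coercivity_constant_le_norm:
  fixes S :: "'a::real_inner \<Rightarrow>\<^sub>L 'a"
  assumes nontrivial: "\<exists>x::'a. x \<noteq> 0" and coercive: "\<And>x. c * (norm x)\<^sup>2 \<le> inner x (S x)"
  shows "c \<le> norm S"
proof -
  obtain x :: 'a where "x \<noteq> 0" using nontrivial by auto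
  moreover have "c * norm x \<le> norm S * norm x"
    using coercive_imp_bounded_below[OF coercive, of x] norm_blinfun[of S x] by linarith
  ultimately show ?thesis by simp
qed

lemma coercive_imp_invertible_op:
  fixes S :: "'a::{real_inner,complete_space} \<Rightarrow>\<^sub>L 'a"
  assumes nontrivial: "\<exists>x::'a. x \<noteq> 0"
    and c: "c > 0" and coercive: "\<And>x. c * (norm x)\<^sup>2 \<le> inner x (S x)"
  shows "invertible_op S"
proof -
  have "c \<le> norm S" by (rule coercivity_constant_le_norm[OF nontrivial coercive])
  define e q where "e = c / (norm S)\<^sup>2" and "q = sqrt (1 - c\<^sup>2 / (norm S)\<^sup>2)"
  have "0 < norm S"
    using c \<open>c \<le> norm S\<close> by linarith
  then have "0 < c\<^sup>2 / (norm S)\<^sup>2" "c\<^sup>2 / (norm S)\<^sup>2 \<le> 1"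
    using c \<open>c \<le> norm S\<close> by (simp_all add: divide_le_eq_1 power_mono)
  then have q: "0 \<le> q" "q < 1"
    by (auto simp: q_def)
  have "\<exists>x. S x = y" for y
  proof -
    define f where "f x = x - e *\<^sub>R (S x - y)" for x
    have "dist (f x) (f z) \<le> q * dist x z" for x z
    proof -
      have "f x - f z = (x - z) - e *\<^sub>R S (x - z)"
        unfolding f_def by (simp add: blinfun.bilinear_simps algebra_simps)
      then show ?thesis
        using coercive_shift_contraction[OF c \<open>c \<le> norm S\<close> coercive, of "x - z"]
        by (simp add: dist_norm e_def q_def)
    qed
    then obtain x where "f x = x" using banach_fix_type[OF q] by blast
    then show ?thesis using c \<open>c \<le> norm S\<close> by (auto simp: f_def e_def)
  qed
  then have "surj (blinfun_apply S)" by (metis surjI)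
  then show ?thesis
    by (rule bounded_below_surj_imp_invertible_op[OF c coercive_imp_bounded_below[OF coercive]])
qed

section \<open>Symmetric operators and their numerical range\<close>

definition symmetric_op :: "('a::real_inner \<Rightarrow>\<^sub>L 'a) \<Rightarrow> bool" where
  "symmetric_op S \<longleftrightarrow> (\<forall>x y. inner (S x) y = inner x (S y))"

definition numrange_inf :: "('a::real_inner \<Rightarrow>\<^sub>L 'a) \<Rightarrow> real" where
  "numrange_inf S = Inf ((\<lambda>x. inner x (S x)) ` {x. norm x = 1})"

definition numrange_sup :: "('a::real_inner \<Rightarrow>\<^sub>L 'a) \<Rightarrow> real" where
  "numrange_sup S = - numrange_inf (- S)"

definition real_spectrum :: "('a::real_normed_vector \<Rightarrow>\<^sub>L 'a) \<Rightarrow> real set" where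
  "real_spectrum S = {t. \<not> invertible_op (S - t *\<^sub>R id_blinfun)}"

lemma symmetric_op_minus_scaleR_id:
  "symmetric_op S \<Longrightarrow> symmetric_op (S - t *\<^sub>R id_blinfun)"
  unfolding symmetric_op_def
  by (simp add: blinfun.bilinear_simps inner_diff_left inner_diff_right inner_commute)

lemma symmetric_op_uminus: "symmetric_op S \<Longrightarrow> symmetric_op (- S)"
  unfolding symmetric_op_def by (simp add: blinfun.bilinear_simps)

lemma symmetric_op_compose_self: "symmetric_op T \<Longrightarrow> symmetric_op (T o\<^sub>L T)"
  unfolding symmetric_op_def by simp

lemma symmetric_op_form_compose_self:
  "symmetric_op T \<Longrightarrow> inner x (T (T x)) = (norm (T x))\<^sup>2"
  unfolding symmetric_op_def by (simp add: power2_norm_eq_inner)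

lemma unit_vector_exists:
  "\<exists>x::'a::real_normed_vector. x \<noteq> 0 \<Longrightarrow> \<exists>x::'a. norm x = 1"
  by (metis norm_sgn)

lemma numrange_inf_bdd_below:
  fixes S :: "'a::real_inner \<Rightarrow>\<^sub>L 'a"
  shows "bdd_below ((\<lambda>x. inner x (S x)) ` {x. norm x = 1})"
proof (rule bdd_belowI2[where m = "- norm S"])
  fix x :: 'a assume "x \<in> {x. norm x = 1}"
  then have "\<bar>inner x (S x)\<bar> \<le> norm S"
    using Cauchy_Schwarz_ineq2[of x "S x"] norm_blinfun[of S x] by simp
  then show "- norm S \<le> inner x (S x)" by simp
qed

lemma numrange_inf_le:
  fixes S :: "'a::real_inner \<Rightarrow>\<^sub>L 'a"
  shows "norm x = 1 \<Longrightarrow> numrange_inf S \<le> inner x (S x)"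
  unfolding numrange_inf_def by (rule cInf_lower[OF _ numrange_inf_bdd_below]) auto

lemma numrange_inf_greatest:
  fixes S :: "'a::real_inner \<Rightarrow>\<^sub>L 'a"
  assumes "\<exists>x::'a. x \<noteq> 0" and "\<And>x. norm x = 1 \<Longrightarrow> b \<le> inner x (S x)"
  shows "b \<le> numrange_inf S"
  unfolding numrange_inf_def using unit_vector_exists[OF assms(1)] assms(2)
  by (intro cInf_greatest) auto

lemma numrange_inf_approx:
  fixes S :: "'a::real_inner \<Rightarrow>\<^sub>L 'a"
  assumes "\<exists>x::'a. x \<noteq> 0" and "e > 0"
  obtains x where "norm x = 1" and "inner x (S x) < numrange_inf S + e"
proof -
  have "(\<lambda>x. inner x (S x)) ` {x. norm x = 1} \<noteq> {}"
    using unit_vector_exists[OF assms(1)] by auto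
  from cInf_lessD[OF this, of "numrange_inf S + e"] assms(2) that show ?thesis
    by (auto simp: numrange_inf_def)
qed

lemma numrange_inf_mult_le_form:
  fixes S :: "'a::real_inner \<Rightarrow>\<^sub>L 'a"
  shows "numrange_inf S * (norm x)\<^sup>2 \<le> inner x (S x)"
proof (cases "x = 0")
  case False
  have "numrange_inf S \<le> inner (x /\<^sub>R norm x) (S (x /\<^sub>R norm x))"
    by (rule numrange_inf_le) (use False in simp)
  also have "\<dots> = inner x (S x) / (norm x)\<^sup>2"
    by (simp add: blinfun.bilinear_simps power2_eq_square divide_inverse inverse_mult_distrib mult_ac)
  finally show ?thesis using False by (simp add: field_simps)
qed simp

lemma numrange_sup_ge:
  fixes S :: "'a::real_inner \<Rightarrow>\<^sub>L 'a"
  shows "norm x = 1 \<Longrightarrow> inner x (S x) \<le> numrange_sup S"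
  using numrange_inf_le[of x "- S"] by (simp add: numrange_sup_def blinfun.bilinear_simps)

lemma numrange_sup_least:
  fixes S :: "'a::real_inner \<Rightarrow>\<^sub>L 'a"
  assumes "\<exists>x::'a. x \<noteq> 0" and "\<And>x. norm x = 1 \<Longrightarrow> inner x (S x) \<le> b"
  shows "numrange_sup S \<le> b"
  using numrange_inf_greatest[OF assms(1), of "- b" "- S"] assms(2)
  by (simp add: numrange_sup_def blinfun.bilinear_simps)

lemma form_le_numrange_sup_mult:
  fixes S :: "'a::real_inner \<Rightarrow>\<^sub>L 'a"
  shows "inner x (S x) \<le> numrange_sup S * (norm x)\<^sup>2"
  using numrange_inf_mult_le_form[of "- S" x] by (simp add: numrange_sup_def blinfun.bilinear_simps)

lemma numrange_inf_le_sup: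
  fixes S :: "'a::real_inner \<Rightarrow>\<^sub>L 'a"
  assumes "\<exists>x::'a. x \<noteq> 0"
  shows "numrange_inf S \<le> numrange_sup S"
  using unit_vector_exists[OF assms] numrange_inf_le numrange_sup_ge by (metis order_trans)

lemma numrange_inf_lipschitz:
  fixes A B :: "'a::real_inner \<Rightarrow>\<^sub>L 'a"
  assumes "\<exists>x::'a. x \<noteq> 0"
  shows "\<bar>numrange_inf A - numrange_inf B\<bar> \<le> norm (A - B)"
proof -
  have "numrange_inf A \<le> numrange_inf B + norm (A - B)" for A B :: "'a \<Rightarrow>\<^sub>L 'a"
  proof -
    have "numrange_inf A - norm (A - B) \<le> numrange_inf B"
    proof (rule numrange_inf_greatest[OF assms])
      fix x :: 'a assume x: "norm x = 1"
      have "\<bar>inner x ((A - B) x)\<bar> \<le> norm (A - B)"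
        using Cauchy_Schwarz_ineq2[of x "(A - B) x"] norm_blinfun[of "A - B" x] x by simp
      then show "numrange_inf A - norm (A - B) \<le> inner x (B x)"
        using numrange_inf_le[OF x, of A] by (simp add: blinfun.bilinear_simps inner_diff_right)
    qed
    then show ?thesis by simp
  qed
  from this[of A B] this[of B A] show ?thesis
    by (simp add: norm_minus_commute abs_le_iff)
qed

lemma numrange_sup_lipschitz:
  fixes A B :: "'a::real_inner \<Rightarrow>\<^sub>L 'a"
  assumes "\<exists>x::'a. x \<noteq> 0"
  shows "\<bar>numrange_sup A - numrange_sup B\<bar> \<le> norm (A - B)"
  using numrange_inf_lipschitz[OF assms, of "- A" "- B"]
  by (simp add: numrange_sup_def norm_minus_commute abs_minus_commute)

section \<open>The real spectrum of a symmetric operator\<close>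

lemma nonneg_quadratic_imp_discriminant_le:
  fixes a b c :: real
  assumes nonneg: "\<And>s. 0 \<le> a + 2 * s * b + s\<^sup>2 * c" and "c \<ge> 0"
  shows "b\<^sup>2 \<le> a * c"
proof (cases "c = 0")
  case True
  show ?thesis
  proof (cases "b = 0")
    case False
    have "0 \<le> a + 2 * (- (a + 1) / (2 * b)) * b + (- (a + 1) / (2 * b))\<^sup>2 * c"
      by (rule nonneg)
    then show ?thesis using True False by (simp add: field_simps)
  qed (use nonneg[of 0] True in simp)
next
  case False
  then have "c > 0" using \<open>c \<ge> 0\<close> by simp
  have "0 \<le> a + 2 * (- b / c) * b + (- b / c)\<^sup>2 * c"
    by (rule nonneg)
  then show ?thesis using \<open>c > 0\<close> by (simp add: field_simps power2_eq_square)
qed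

lemma positive_form_Cauchy_Schwarz:
  fixes T :: "'a::real_inner \<Rightarrow>\<^sub>L 'a"
  assumes "symmetric_op T" and pos: "\<And>x. 0 \<le> inner x (T x)"
  shows "(inner (T x) y)\<^sup>2 \<le> inner x (T x) * inner y (T y)"
proof (rule nonneg_quadratic_imp_discriminant_le)
  fix s :: real
  have "inner (x + s *\<^sub>R y) (T (x + s *\<^sub>R y))
      = inner x (T x) + 2 * s * inner (T x) y + s\<^sup>2 * inner y (T y)"
    using assms(1) unfolding symmetric_op_def
    by (simp add: blinfun.bilinear_simps inner_add_left inner_add_right
        inner_commute[of y "T x"] power2_eq_square algebra_simps)
  then show "0 \<le> inner x (T x) + 2 * s * inner (T x) y + s\<^sup>2 * inner y (T y)"
    using pos by metis
qed (rule pos)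

lemma positive_form_norm_square_le:
  fixes T :: "'a::real_inner \<Rightarrow>\<^sub>L 'a"
  assumes sym: "symmetric_op T" and pos: "\<And>x. 0 \<le> inner x (T x)"
  shows "(norm (T x))\<^sup>2 \<le> norm T * inner x (T x)"
proof (cases "T x = 0")
  case False
  have "(inner (T x) (T x))\<^sup>2 \<le> inner x (T x) * inner (T x) (T (T x))"
    by (rule positive_form_Cauchy_Schwarz[OF sym pos])
  also have "\<dots> \<le> inner x (T x) * (norm T * (norm (T x))\<^sup>2)"
  proof (rule mult_left_mono[OF _ pos])
    have "inner (T x) (T (T x)) \<le> norm (T x) * norm (T (T x))"
      by (metis Cauchy_Schwarz_ineq2 abs_le_D1)
    also have "\<dots> \<le> norm (T x) * (norm T * norm (T x))"
      by (simp add: mult_left_mono norm_blinfun)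
    finally show "inner (T x) (T (T x)) \<le> norm T * (norm (T x))\<^sup>2"
      by (simp add: power2_eq_square mult_ac)
  qed
  finally have "((norm (T x))\<^sup>2)\<^sup>2 \<le> (norm T * inner x (T x)) * (norm (T x))\<^sup>2"
    by (simp add: power2_norm_eq_inner mult_ac)
  then show ?thesis using False by (simp add: power2_eq_square)
qed (simp add: pos)

text \<open>If \<open>T = S - m\<close> with \<open>m\<close> the bottom of the numerical range had an inverse \<open>R\<close>, then
  \<open>1 \<le> \<parallel>R\<parallel>\<^sup>2 \<parallel>T\<parallel> \<langle>x, T x\<rangle>\<close> on the unit sphere, contradicting \<open>inf \<langle>x, T x\<rangle> = 0\<close>.\<close>

lemma numrange_inf_in_real_spectrum:
  fixes S :: "'a::real_inner \<Rightarrow>\<^sub>L 'a"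
  assumes sym: "symmetric_op S" and nontrivial: "\<exists>x::'a. x \<noteq> 0"
  shows "numrange_inf S \<in> real_spectrum S"
proof (rule ccontr)
  define T where "T = S - numrange_inf S *\<^sub>R id_blinfun"
  have T_form: "inner x (T x) = inner x (S x) - numrange_inf S * (norm x)\<^sup>2" for x
    by (simp add: T_def blinfun.bilinear_simps inner_diff_right power2_norm_eq_inner)
  have pos: "0 \<le> inner x (T x)" for x
    using numrange_inf_mult_le_form[of S x] by (simp add: T_form)
  have sym_T: "symmetric_op T"
    unfolding T_def by (rule symmetric_op_minus_scaleR_id[OF sym])
  assume "numrange_inf S \<notin> real_spectrum S"
  then obtain R :: "'a \<Rightarrow>\<^sub>L 'a" where R: "\<And>x. R (T x) = x"
    unfolding real_spectrum_def T_def by (metis (mono_tags) invertible_opE mem_Collect_eq)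
  define N where "N = (norm R)\<^sup>2 * norm T"
  have "N \<ge> 0" unfolding N_def by simp
  have lower: "1 \<le> N * inner x (T x)" if "norm x = 1" for x
  proof -
    have "1 \<le> norm R * norm (T x)"
      using that norm_blinfun[of R "T x"] by (simp add: R)
    then have "1 \<le> (norm R * norm (T x))\<^sup>2" by (simp add: one_le_power)
    also have "\<dots> \<le> (norm R)\<^sup>2 * (norm T * inner x (T x))"
      unfolding power_mult_distrib
      by (rule mult_left_mono[OF positive_form_norm_square_le[OF sym_T pos]]) simp
    finally show ?thesis by (simp add: N_def mult_ac)
  qed
  obtain x where x: "norm x = 1" "inner x (S x) < numrange_inf S + 1 / (N + 1)"
    using numrange_inf_approx[OF nontrivial, of "1 / (N + 1)" S] \<open>N \<ge> 0\<close> by auto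
  then have "N * inner x (T x) \<le> N * (1 / (N + 1))"
    using \<open>N \<ge> 0\<close> by (intro mult_left_mono) (simp_all add: T_form)
  also have "\<dots> < 1" using \<open>N \<ge> 0\<close> by (simp add: field_simps)
  finally show False using lower[OF x(1)] by simp
qed

lemma not_in_real_spectrum_below_numrange_inf:
  fixes S :: "'a::{real_inner,complete_space} \<Rightarrow>\<^sub>L 'a"
  assumes "\<exists>x::'a. x \<noteq> 0" and "t < numrange_inf S"
  shows "t \<notin> real_spectrum S"
proof -
  have "invertible_op (S - t *\<^sub>R id_blinfun)"
  proof (rule coercive_imp_invertible_op[OF assms(1)])
    show "0 < numrange_inf S - t" using assms(2) by simp
    show "(numrange_inf S - t) * (norm x)\<^sup>2 \<le> inner x ((S - t *\<^sub>R id_blinfun) x)" for x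
      using numrange_inf_mult_le_form[of S x]
      by (simp add: blinfun.bilinear_simps inner_diff_right power2_norm_eq_inner algebra_simps)
  qed
  then show ?thesis unfolding real_spectrum_def by simp
qed

lemma real_spectrum_uminus: "real_spectrum (- S) = uminus ` real_spectrum S"
proof -
  have shift: "- S - t *\<^sub>R id_blinfun = - (S - (- t) *\<^sub>R id_blinfun)" for t
    by (simp add: algebra_simps)
  have "t \<in> real_spectrum (- S) \<longleftrightarrow> - t \<in> real_spectrum S" for t
    by (simp only: real_spectrum_def mem_Collect_eq shift invertible_op_uminus_iff)
  then show ?thesis by (force simp: image_iff)
qed

lemma numrange_sup_in_real_spectrum:
  fixes S :: "'a::real_inner \<Rightarrow>\<^sub>L 'a"
  assumes "symmetric_op S" and "\<exists>x::'a. x \<noteq> 0"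
  shows "numrange_sup S \<in> real_spectrum S"
  using numrange_inf_in_real_spectrum[OF symmetric_op_uminus[OF assms(1)] assms(2)]
  by (auto simp: numrange_sup_def real_spectrum_uminus)

lemma not_in_real_spectrum_above_numrange_sup:
  fixes S :: "'a::{real_inner,complete_space} \<Rightarrow>\<^sub>L 'a"
  assumes "\<exists>x::'a. x \<noteq> 0" and "numrange_sup S < t"
  shows "t \<notin> real_spectrum S"
  using not_in_real_spectrum_below_numrange_inf[OF assms(1), of "- t" "- S"] assms(2)
  by (auto simp: numrange_sup_def real_spectrum_uminus)

lemma real_spectrum_subset_numrange:
  fixes S :: "'a::{real_inner,complete_space} \<Rightarrow>\<^sub>L 'a"
  assumes "\<exists>x::'a. x \<noteq> 0"
  shows "real_spectrum S \<subseteq> {numrange_inf S..numrange_sup S}"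
  using not_in_real_spectrum_below_numrange_inf[OF assms]
    not_in_real_spectrum_above_numrange_sup[OF assms] by force

lemma real_spectrum_shifted_square:
  fixes A :: "'a::real_normed_vector \<Rightarrow>\<^sub>L 'a"
  assumes "s\<^sup>2 \<in> real_spectrum ((A - l *\<^sub>R id_blinfun) o\<^sub>L (A - l *\<^sub>R id_blinfun))"
  shows "l + s \<in> real_spectrum A \<or> l - s \<in> real_spectrum A"
proof -
  have "((A - l *\<^sub>R id_blinfun) o\<^sub>L (A - l *\<^sub>R id_blinfun)) - s\<^sup>2 *\<^sub>R id_blinfun
      = (A - (l + s) *\<^sub>R id_blinfun) o\<^sub>L (A - (l - s) *\<^sub>R id_blinfun)"
    by (rule blinfun_eqI) (simp add: blinfun.bilinear_simps algebra_simps power2_eq_square)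
  then show ?thesis
    using assms invertible_op_compose unfolding real_spectrum_def by fastforce
qed

text \<open>The bottom \<open>w\<close> of the numerical range of \<open>(A - l)\<^sup>2\<close> lies in its spectrum, so
  \<open>l \<plusminus> \<surd>w\<close> meets the spectrum of \<open>A\<close>; hence \<open>d\<^sup>2 \<le> w\<close>.\<close>

lemma bounded_below_if_far_from_real_spectrum:
  fixes A :: "'a::real_inner \<Rightarrow>\<^sub>L 'a"
  assumes sym: "symmetric_op A" and nontrivial: "\<exists>x::'a. x \<noteq> 0"
    and far: "\<And>\<mu>. \<mu> \<in> real_spectrum A \<Longrightarrow> d \<le> \<bar>l - \<mu>\<bar>" and "d \<ge> 0"
  shows "d * norm x \<le> norm (A x - l *\<^sub>R x)"
proof -
  define T where "T = A - l *\<^sub>R id_blinfun"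
  have sym_T: "symmetric_op T"
    unfolding T_def by (rule symmetric_op_minus_scaleR_id[OF sym])
  define w where "w = numrange_inf (T o\<^sub>L T)"
  have "0 \<le> w"
    unfolding w_def
    by (rule numrange_inf_greatest[OF nontrivial]) (simp add: symmetric_op_form_compose_self[OF sym_T])
  have "(sqrt w)\<^sup>2 \<in> real_spectrum (T o\<^sub>L T)"
    using numrange_inf_in_real_spectrum[OF symmetric_op_compose_self[OF sym_T] nontrivial] \<open>0 \<le> w\<close>
    by (simp add: w_def)
  then have "l + sqrt w \<in> real_spectrum A \<or> l - sqrt w \<in> real_spectrum A"
    unfolding T_def by (rule real_spectrum_shifted_square)
  then have "d \<le> sqrt w"
    using far[of "l + sqrt w"] far[of "l - sqrt w"] \<open>0 \<le> w\<close> by auto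
  then have "d\<^sup>2 \<le> w"
    using \<open>d \<ge> 0\<close> \<open>0 \<le> w\<close> by (metis power_mono real_sqrt_pow2)
  then have "(d * norm x)\<^sup>2 \<le> w * (norm x)\<^sup>2"
    by (simp add: power_mult_distrib mult_right_mono)
  also have "\<dots> \<le> (norm (T x))\<^sup>2"
    using numrange_inf_mult_le_form[of "T o\<^sub>L T" x] symmetric_op_form_compose_self[OF sym_T, of x]
    by (simp add: w_def)
  finally have "d * norm x \<le> norm (T x)"
    using \<open>d \<ge> 0\<close> by (simp add: power2_le_iff_abs_le)
  then show ?thesis by (simp add: T_def blinfun.bilinear_simps)
qed

lemma real_spectrum_perturbation:
  fixes A B :: "'a::{real_inner,complete_space} \<Rightarrow>\<^sub>L 'a"
  assumes sym_A: "symmetric_op A" and sym_B: "symmetric_op B" and nontrivial: "\<exists>x::'a. x \<noteq> 0"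
    and l: "l \<in> real_spectrum B" and d: "norm (A - B) < d"
  shows "\<exists>\<mu>\<in>real_spectrum A. \<bar>l - \<mu>\<bar> < d"
proof (rule ccontr)
  assume "\<not> ?thesis"
  then have far: "\<And>\<mu>. \<mu> \<in> real_spectrum A \<Longrightarrow> d \<le> \<bar>l - \<mu>\<bar>" by force
  define U where "U = B - l *\<^sub>R id_blinfun"
  define c where "c = d - norm (A - B)"
  have "c > 0" using d by (simp add: c_def)
  have "d \<ge> 0" using d norm_ge_zero[of "A - B"] by linarith
  have below: "c * norm x \<le> norm (U x)" for x
  proof -
    have "d * norm x \<le> norm (A x - l *\<^sub>R x)"
      by (rule bounded_below_if_far_from_real_spectrum[OF sym_A nontrivial far \<open>d \<ge> 0\<close>])
    also have "A x - l *\<^sub>R x = U x + (A - B) x"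
      by (simp add: U_def blinfun.bilinear_simps)
    also have "norm (U x + (A - B) x) \<le> norm (U x) + norm (A - B) * norm x"
      by (metis add_left_mono norm_blinfun norm_triangle_ineq order_trans)
    finally show ?thesis by (simp add: c_def algebra_simps)
  qed
  have sym_U: "symmetric_op U"
    unfolding U_def by (rule symmetric_op_minus_scaleR_id[OF sym_B])
  have "invertible_op (U o\<^sub>L U)"
  proof (rule coercive_imp_invertible_op[OF nontrivial])
    show "0 < c\<^sup>2" using \<open>c > 0\<close> by simp
    show "c\<^sup>2 * (norm x)\<^sup>2 \<le> inner x ((U o\<^sub>L U) x)" for x
      using power_mono[OF below[of x]] \<open>c > 0\<close>
      by (simp add: symmetric_op_form_compose_self[OF sym_U] power_mult_distrib)
  qed
  then have "invertible_op U" by (rule invertible_op_compose_selfD)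
  then show False using l unfolding real_spectrum_def U_def by simp
qed

section \<open>Scalar operators and projections\<close>

lemma symmetric_op_eq_zeroI:
  fixes Q :: "'a::real_inner \<Rightarrow>\<^sub>L 'a"
  assumes sym: "symmetric_op Q" and zero: "\<And>x. inner x (Q x) = 0"
  shows "Q = 0"
proof (rule blinfun_eqI)
  fix x
  have "inner (x + Q x) (Q (x + Q x))
      = inner x (Q x) + 2 * inner (Q x) (Q x) + inner (Q x) (Q (Q x))"
    using sym unfolding symmetric_op_def
    by (simp add: blinfun.bilinear_simps inner_add_left inner_add_right inner_commute)
  then have "inner (Q x) (Q x) = 0"
    using zero[of x] zero[of "x + Q x"] zero[of "Q x"] by simp
  then show "Q x = (0 :: 'a \<Rightarrow>\<^sub>L 'a) x" by simp
qed

lemma symmetric_op_eq_scaleR_idI: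
  fixes A :: "'a::real_inner \<Rightarrow>\<^sub>L 'a"
  assumes sym: "symmetric_op A" and form: "\<And>x. inner x (A x) = l * inner x x"
  shows "A = l *\<^sub>R id_blinfun"
proof -
  have "A - l *\<^sub>R id_blinfun = 0"
    using symmetric_op_minus_scaleR_id[OF sym] form
    by (intro symmetric_op_eq_zeroI) (simp_all add: blinfun.bilinear_simps inner_diff_right)
  then show ?thesis by simp
qed

lemma symmetric_op_numrange_inf_eq_sup:
  fixes A :: "'a::real_inner \<Rightarrow>\<^sub>L 'a"
  assumes sym: "symmetric_op A" and "numrange_inf A = numrange_sup A"
  shows "A = numrange_inf A *\<^sub>R id_blinfun"
proof (rule symmetric_op_eq_scaleR_idI[OF sym])
  show "inner x (A x) = numrange_inf A * inner x x" for x
    using numrange_inf_mult_le_form[of A x] form_le_numrange_sup_mult[of x A] assms(2)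
    by (simp add: power2_norm_eq_inner)
qed

lemma numrange_scaleR_id:
  assumes "\<exists>x::'a. x \<noteq> 0"
  shows "numrange_inf (l *\<^sub>R id_blinfun :: 'a::real_inner \<Rightarrow>\<^sub>L 'a) = l"
    and "numrange_sup (l *\<^sub>R id_blinfun :: 'a::real_inner \<Rightarrow>\<^sub>L 'a) = l"
proof -
  obtain x :: 'a where x: "norm x = 1" using unit_vector_exists[OF assms] by blast
  have form: "inner y ((l *\<^sub>R id_blinfun :: 'a \<Rightarrow>\<^sub>L 'a) y) = l" if "norm y = 1" for y
    using that by (simp add: blinfun.bilinear_simps power2_norm_eq_inner[symmetric])
  show "numrange_inf (l *\<^sub>R id_blinfun :: 'a \<Rightarrow>\<^sub>L 'a) = l"
    using numrange_inf_greatest[OF assms, of l] numrange_inf_le[OF x] form x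
    by (metis order_antisym order_refl)
  show "numrange_sup (l *\<^sub>R id_blinfun :: 'a \<Rightarrow>\<^sub>L 'a) = l"
    using numrange_sup_least[OF assms, of _ l] numrange_sup_ge[OF x] form x
    by (metis order_antisym order_refl)
qed

text \<open>With \<open>T = A - 1/2\<close>, the spectrum of \<open>T\<^sup>2\<close> can only contain \<open>1/4\<close>, so the whole
  numerical range of \<open>T\<^sup>2\<close> is \<open>{1/4}\<close> and \<open>T\<^sup>2 = 1/4\<close>, i.e. \<open>A\<^sup>2 = A\<close>.\<close>

lemma idempotent_if_real_spectrum_subset_01:
  fixes A :: "'a::{real_inner,complete_space} \<Rightarrow>\<^sub>L 'a"
  assumes sym: "symmetric_op A" and nontrivial: "\<exists>x::'a. x \<noteq> 0"
    and spec: "real_spectrum A \<subseteq> {0, 1}"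
  shows "A o\<^sub>L A = A"
proof -
  define T where "T = A - (1/2) *\<^sub>R id_blinfun"
  have sym_T: "symmetric_op T"
    unfolding T_def by (rule symmetric_op_minus_scaleR_id[OF sym])
  have sym_TT: "symmetric_op (T o\<^sub>L T)"
    by (rule symmetric_op_compose_self[OF sym_T])
  have quarter: "t = 1/4" if t: "t \<in> real_spectrum (T o\<^sub>L T)" and "0 \<le> t" for t
  proof -
    have "(sqrt t)\<^sup>2 \<in> real_spectrum (T o\<^sub>L T)" using t \<open>0 \<le> t\<close> by simp
    then have "1/2 + sqrt t \<in> real_spectrum A \<or> 1/2 - sqrt t \<in> real_spectrum A"
      unfolding T_def by (rule real_spectrum_shifted_square)
    then have "1/2 + sqrt t \<in> {0, 1} \<or> 1/2 - sqrt t \<in> {0, 1}" using spec by blast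
    then have "sqrt t = 1/2" using real_sqrt_ge_zero[OF \<open>0 \<le> t\<close>] by auto
    then have "sqrt t = sqrt (1/4)" by (simp add: real_sqrt_divide)
    then show ?thesis by simp
  qed
  have "0 \<le> numrange_inf (T o\<^sub>L T)"
    by (rule numrange_inf_greatest[OF nontrivial]) (simp add: symmetric_op_form_compose_self[OF sym_T])
  then have inf: "numrange_inf (T o\<^sub>L T) = 1/4"
    using quarter numrange_inf_in_real_spectrum[OF sym_TT nontrivial] by blast
  moreover have "numrange_sup (T o\<^sub>L T) = 1/4"
    using quarter numrange_sup_in_real_spectrum[OF sym_TT nontrivial]
      numrange_inf_le_sup[OF nontrivial, of "T o\<^sub>L T"] inf by force
  ultimately have "T o\<^sub>L T = (1/4) *\<^sub>R id_blinfun"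
    using symmetric_op_numrange_inf_eq_sup[OF sym_TT] inf by metis
  then have "T (T x) = (1/4) *\<^sub>R x" for x
    by (metis blinfun_apply_blinfun_compose blinfun.scaleR_left blinfun_apply_id_blinfun)
  then have "A (A x) - A x = 0" for x
    by (simp add: T_def blinfun.bilinear_simps algebra_simps)
       (simp add: scaleR_add_left[symmetric])
  then show ?thesis by (auto intro!: blinfun_eqI)
qed

lemma real_spectrum_projection:
  fixes A :: "'a::real_normed_vector \<Rightarrow>\<^sub>L 'a"
  assumes idem: "A o\<^sub>L A = A" and "A \<noteq> 0" and "A \<noteq> id_blinfun"
  shows "real_spectrum A = {0, 1}"
proof -
  have AA: "A (A x) = A x" for x using idem by (metis blinfun_apply_blinfun_compose)
  have "t \<notin> real_spectrum A" if "t \<noteq> 0" "t \<noteq> 1" for t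
  proof -
    define R where "R = (1 / (1 - t)) *\<^sub>R A + (- 1 / t) *\<^sub>R (id_blinfun - A)"
    have "1 + t / (1 - t) = 1 / (1 - t)" using that by (simp add: field_simps)
    then have scale: "(1 / (1 - t)) *\<^sub>R v = v + (t / (1 - t)) *\<^sub>R v" for v :: 'a
      by (metis scaleR_add_left scaleR_one)
    have "R ((A - t *\<^sub>R id_blinfun) x) = x" "(A - t *\<^sub>R id_blinfun) (R x) = x" for x
      using that by (simp_all add: R_def blinfun.bilinear_simps AA field_simps scale)
        (simp_all add: scaleR_add_left[symmetric] field_simps)
    then show ?thesis unfolding real_spectrum_def by (auto intro: invertible_opI)
  qed
  moreover have "0 \<in> real_spectrum A"
  proof -
    have "\<not> invertible_op A"
    proof
      assume "invertible_op A"
      then obtain R :: "'a \<Rightarrow>\<^sub>L 'a" where "\<And>x. R (A x) = x" by (elim invertible_opE) blast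
      then have "A x = x" for x by (metis AA)
      then show False using \<open>A \<noteq> id_blinfun\<close> by (auto intro!: blinfun_eqI)
    qed
    then show ?thesis unfolding real_spectrum_def by simp
  qed
  moreover have "1 \<in> real_spectrum A"
  proof -
    have "\<not> invertible_op (A - id_blinfun)"
    proof
      assume "invertible_op (A - id_blinfun)"
      then obtain R :: "'a \<Rightarrow>\<^sub>L 'a" where R: "\<And>x. R ((A - id_blinfun) x) = x"
        by (elim invertible_opE) blast
      have "A x = R ((A - id_blinfun) (A x))" for x by (simp add: R)
      then have "A x = 0" for x by (simp add: blinfun.bilinear_simps AA)
      then show False using \<open>A \<noteq> 0\<close> by (auto intro!: blinfun_eqI)
    qed
    then show ?thesis unfolding real_spectrum_def by simp
  qed
  ultimately show ?thesis by blast
qed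

section \<open>The functions of \<open>(M, m, \<delta>)\<close> behind \<open>F\<^sub>5\<close> and \<open>B\<^sub>5\<close>\<close>

definition F5_of :: "real \<Rightarrow> real \<Rightarrow> real \<Rightarrow> real" where
  "F5_of M m d = (let a = (M + m) / 2 in
     sqrt ((a\<^sup>2 - d) / 2 + M * m / 2) + sqrt (((1 - a)\<^sup>2 - d) / 2 + (1 - M) * (1 - m) / 2))"

definition B5_of :: "real \<Rightarrow> real \<Rightarrow> real \<Rightarrow> real" where
  "B5_of M m d = (let a = (M + m) / 2 in
     sqrt ((a\<^sup>2 - d) / 2 + M * m / 2) - sqrt (((1 - a)\<^sup>2 - d) / 2 + (1 - M) * (1 - m) / 2))"

lemma F5_eq_F5_of: "F5 J A = F5_of (specmax J A) (specmin J A) (delta J A)"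
  unfolding F5_def F5_of_def a0_def Let_def ..

lemma B5_eq_B5_of: "B5 J A = B5_of (specmax J A) (specmin J A) (delta J A)"
  unfolding B5_def B5_of_def a0_def Let_def ..

lemma F5_of_reflect: "F5_of (1 - m) (1 - M) d = F5_of M m d"
proof -
  have "(1 - m + (1 - M)) / 2 = 1 - (M + m) / 2" by (simp add: field_simps)
  then show ?thesis
    unfolding F5_of_def Let_def by (simp only: diff_diff_eq2 mult.commute add.commute) simp
qed

lemma B5_of_reflect: "B5_of (1 - m) (1 - M) d = - B5_of M m d"
proof -
  have "(1 - m + (1 - M)) / 2 = 1 - (M + m) / 2" by (simp add: field_simps)
  then show ?thesis
    unfolding B5_of_def Let_def by (simp only: diff_diff_eq2 mult.commute add.commute) simp
qed

locale spectral_bounds =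
  fixes M m d :: real
  assumes m_nonneg: "0 \<le> m" and m_le_M: "m \<le> M" and M_le_1: "M \<le> 1"
    and d_nonneg: "0 \<le> d" and d_le: "d \<le> (M - m)\<^sup>2 / 4"
begin

definition "a = (M + m) / 2"
definition "p = (a\<^sup>2 - d) / 2 + M * m / 2"
definition "q = ((1 - a)\<^sup>2 - d) / 2 + (1 - M) * (1 - m) / 2"

lemma F5_of_eq: "F5_of M m d = sqrt p + sqrt q"
  unfolding F5_of_def p_def q_def a_def Let_def ..

lemma B5_of_eq: "B5_of M m d = sqrt p - sqrt q"
  unfolding B5_of_def p_def q_def a_def Let_def ..

lemma a_bounds: "0 \<le> a" "a \<le> 1"
  unfolding a_def using m_nonneg m_le_M M_le_1 by auto

lemma p_nonneg: "0 \<le> p"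
proof -
  have "p = M * m + ((M - m)\<^sup>2 / 4 - d) / 2"
    unfolding p_def a_def by (simp add: power2_eq_square field_simps)
  moreover have "0 \<le> M * m" using m_nonneg m_le_M by simp
  ultimately show ?thesis using d_le by simp
qed

lemma q_nonneg: "0 \<le> q"
proof -
  have "q = (1 - M) * (1 - m) + ((M - m)\<^sup>2 / 4 - d) / 2"
    unfolding q_def a_def by (simp add: power2_eq_square field_simps)
  moreover have "0 \<le> (1 - M) * (1 - m)" using M_le_1 m_le_M by simp
  ultimately show ?thesis using d_le by simp
qed

lemma a_square_eq: "a\<^sup>2 = p + ((M - m)\<^sup>2 / 4 + d) / 2"
  unfolding p_def a_def by (simp add: power2_eq_square field_simps)

lemma one_minus_a_square_eq: "(1 - a)\<^sup>2 = q + ((M - m)\<^sup>2 / 4 + d) / 2"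
  unfolding q_def a_def by (simp add: power2_eq_square field_simps)

lemma sqrt_p_le: "sqrt p \<le> a"
  using a_square_eq a_bounds d_nonneg by (intro real_le_lsqrt) simp_all

lemma sqrt_q_le: "sqrt q \<le> 1 - a"
  using one_minus_a_square_eq a_bounds d_nonneg by (intro real_le_lsqrt) simp_all

lemma p_minus_q: "p - q = 2 * a - 1"
  unfolding p_def q_def a_def by (simp add: power2_eq_square field_simps)

lemma F5_of_bounds: "0 \<le> F5_of M m d" "F5_of M m d \<le> 1"
  using sqrt_p_le sqrt_q_le p_nonneg q_nonneg by (auto simp: F5_of_eq)

lemma F5_of_eq_1_iff: "F5_of M m d = 1 \<longleftrightarrow> M = m"
proof
  assume "F5_of M m d = 1"
  then have "sqrt p = a" using sqrt_p_le sqrt_q_le F5_of_eq by linarith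
  then have "(sqrt p)\<^sup>2 = a\<^sup>2" by simp
  then have "p = a\<^sup>2" using p_nonneg by simp
  then have "(M - m)\<^sup>2 / 4 + d = 0" using a_square_eq by simp
  then show "M = m" using d_nonneg by (simp add: add_nonneg_eq_0_iff)
next
  assume "M = m"
  then have "d = 0" using d_nonneg d_le by simp
  then have "p = a\<^sup>2" "q = (1 - a)\<^sup>2"
    using \<open>M = m\<close> a_square_eq one_minus_a_square_eq by simp_all
  then show "F5_of M m d = 1" using a_bounds by (simp add: F5_of_eq)
qed

lemma F5_of_eq_0_iff: "F5_of M m d = 0 \<longleftrightarrow> M = 1 \<and> m = 0 \<and> d = 1/4"
proof
  assume "F5_of M m d = 0"
  then have "p = 0" "q = 0"
    using p_nonneg q_nonneg real_sqrt_ge_zero[OF p_nonneg] real_sqrt_ge_zero[OF q_nonneg]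
    by (simp_all add: F5_of_eq add_nonneg_eq_0_iff)
  then have "a = 1/2" using p_minus_q by simp
  then have sum: "M + m = 1" unfolding a_def by simp
  have "d = 1/4 + M * m"
    using \<open>p = 0\<close> \<open>a = 1/2\<close> unfolding p_def by (simp add: power2_eq_square field_simps)
  moreover have "(M - m)\<^sup>2 / 4 = 1/4 - M * m"
  proof -
    have "(M - m)\<^sup>2 = (M + m)\<^sup>2 - 4 * (M * m)" by (simp add: power2_eq_square algebra_simps)
    then show ?thesis using sum by simp
  qed
  moreover have "0 \<le> M * m" using m_nonneg m_le_M by simp
  ultimately have "M * m = 0" "d = 1/4" using d_le by auto
  then show "M = 1 \<and> m = 0 \<and> d = 1/4" using sum m_le_M by auto
next
  assume "M = 1 \<and> m = 0 \<and> d = 1/4"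
  then have "p = 0" "q = 0"
    unfolding p_def q_def a_def by (simp_all add: power2_eq_square)
  then show "F5_of M m d = 0" by (simp add: F5_of_eq)
qed

lemma B5_of_bounds: "-1 \<le> B5_of M m d" "B5_of M m d \<le> 1"
  using sqrt_p_le sqrt_q_le a_bounds real_sqrt_ge_zero[OF p_nonneg] real_sqrt_ge_zero[OF q_nonneg]
  unfolding B5_of_eq by linarith+

lemma B5_of_eq_0_iff: "B5_of M m d = 0 \<longleftrightarrow> (M + m) / 2 = 1/2"
proof -
  have "B5_of M m d = 0 \<longleftrightarrow> p = q" using p_nonneg q_nonneg by (simp add: B5_of_eq)
  also have "\<dots> \<longleftrightarrow> a = 1/2" using p_minus_q by auto
  finally show ?thesis by (simp add: a_def)
qed

lemma B5_of_eq_1_iff: "B5_of M m d = 1 \<longleftrightarrow> M = 1 \<and> m = 1"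
proof
  assume "B5_of M m d = 1"
  then have "1 \<le> sqrt p" using B5_of_eq real_sqrt_ge_zero[OF q_nonneg] by linarith
  then have "a = 1" using sqrt_p_le a_bounds by linarith
  then show "M = 1 \<and> m = 1" unfolding a_def using m_le_M M_le_1 by simp
next
  assume "M = 1 \<and> m = 1"
  moreover from this have "d = 0" using d_nonneg d_le by simp
  ultimately have "p = 1" "q = 0" unfolding p_def q_def a_def by simp_all
  then show "B5_of M m d = 1" by (simp add: B5_of_eq)
qed

lemma B5_of_eq_minus_1_iff: "B5_of M m d = -1 \<longleftrightarrow> M = 0 \<and> m = 0"
proof
  assume "B5_of M m d = -1"
  then have "1 \<le> sqrt q" using B5_of_eq real_sqrt_ge_zero[OF p_nonneg] by linarith
  then have "a = 0" using sqrt_q_le a_bounds by linarith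
  then show "M = 0 \<and> m = 0" unfolding a_def using m_le_M m_nonneg by simp
next
  assume "M = 0 \<and> m = 0"
  moreover from this have "d = 0" using d_nonneg d_le by simp
  ultimately have "p = 0" "q = 1" unfolding p_def q_def a_def by simp_all
  then show "B5_of M m d = -1" by (simp add: B5_of_eq)
qed

end

section \<open>Spectral data of effects\<close>

lemma rspectrum_eq_real_spectrum: "rspectrum J A = real_spectrum A"
  unfolding rspectrum_def real_spectrum_def spectrum_def cscal_def by simp

lemma effect_symmetric_op:
  assumes "A \<in> effects J"
  shows "symmetric_op A"
proof -
  have "cinner J (A x) y = cinner J x (A y)" for x y
    using assms unfolding effects_def selfadjoint_def by auto
  then show ?thesis
    unfolding symmetric_op_def cinner_def by (metis complex.sel(1))
qed

lemma delta_le: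
  "t \<in> real_spectrum A \<Longrightarrow> delta J A \<le> (t - a0 J A)\<^sup>2"
  unfolding delta_def rspectrum_eq_real_spectrum
  by (rule cInf_lower) (auto intro!: bdd_belowI2[where m = 0])

lemma delta_greatest:
  "real_spectrum A \<noteq> {} \<Longrightarrow> (\<And>t. t \<in> real_spectrum A \<Longrightarrow> b \<le> (t - a0 J A)\<^sup>2) \<Longrightarrow> b \<le> delta J A"
  unfolding delta_def rspectrum_eq_real_spectrum by (rule cInf_greatest) auto

lemma real_spectrum_complement:
  "real_spectrum (id_blinfun - A) = (\<lambda>t. 1 - t) ` real_spectrum A"
proof -
  have shift: "(id_blinfun - A) - t *\<^sub>R id_blinfun = - (A - (1 - t) *\<^sub>R id_blinfun)" for t
    by (rule blinfun_eqI) (simp add: blinfun.bilinear_simps algebra_simps)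
  have "t \<in> real_spectrum (id_blinfun - A) \<longleftrightarrow> 1 - t \<in> real_spectrum A" for t
    by (simp only: real_spectrum_def mem_Collect_eq shift invertible_op_uminus_iff)
  then show ?thesis by (force simp: image_iff)
qed

lemma real_spectrum_similar:
  fixes C Ci A :: "'a::real_normed_vector \<Rightarrow>\<^sub>L 'a"
  assumes "C o\<^sub>L Ci = id_blinfun" and "Ci o\<^sub>L C = id_blinfun"
  shows "real_spectrum (C o\<^sub>L A o\<^sub>L Ci) = real_spectrum A"
proof -
  have inv: "C (Ci x) = x" "Ci (C x) = x" for x
    using assms by (metis blinfun_apply_blinfun_compose blinfun_apply_id_blinfun)+
  have "invertible_op C" "invertible_op Ci"
    using assms unfolding invertible_op_def by auto
  moreover have "(C o\<^sub>L A o\<^sub>L Ci) - t *\<^sub>R id_blinfun = C o\<^sub>L (A - t *\<^sub>R id_blinfun) o\<^sub>L Ci"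
    and "A - t *\<^sub>R id_blinfun = Ci o\<^sub>L ((C o\<^sub>L A o\<^sub>L Ci) - t *\<^sub>R id_blinfun) o\<^sub>L C" for t
    by (rule blinfun_eqI; simp add: blinfun.bilinear_simps inv)+
  ultimately have "invertible_op ((C o\<^sub>L A o\<^sub>L Ci) - t *\<^sub>R id_blinfun)
      \<longleftrightarrow> invertible_op (A - t *\<^sub>R id_blinfun)" for t
    by (metis invertible_op_compose)
  then show ?thesis unfolding real_spectrum_def by simp
qed

lemma similarity_invariantI:
  assumes "\<And>X Y. real_spectrum X = real_spectrum Y \<Longrightarrow> f X = f Y"
  shows "similarity_invariant J f"
  unfolding similarity_invariant_def using real_spectrum_similar assms by metis

lemma F5_cong_real_spectrum: "real_spectrum X = real_spectrum Y \<Longrightarrow> F5 J X = F5 J Y"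
  by (simp add: F5_def a0_def delta_def specmax_def specmin_def rspectrum_eq_real_spectrum)

lemma B5_cong_real_spectrum: "real_spectrum X = real_spectrum Y \<Longrightarrow> B5 J X = B5 J Y"
  by (simp add: B5_def a0_def delta_def specmax_def specmin_def rspectrum_eq_real_spectrum)

lemma square_le_square_add_abs_diff:
  fixes u v :: real
  assumes "\<bar>u\<bar> \<le> 1" and "\<bar>v\<bar> \<le> 1"
  shows "u\<^sup>2 \<le> v\<^sup>2 + 2 * \<bar>u - v\<bar>"
proof -
  have "u\<^sup>2 - v\<^sup>2 = (u - v) * (u + v)" by (simp add: power2_eq_square algebra_simps)
  also have "\<dots> \<le> \<bar>u - v\<bar> * \<bar>u + v\<bar>" by (metis abs_ge_self abs_mult)
  also have "\<dots> \<le> \<bar>u - v\<bar> * 2" using assms by (intro mult_left_mono) auto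
  finally show ?thesis by simp
qed

context
  fixes J :: "'a::{real_inner,complete_space} \<Rightarrow>\<^sub>L 'a"
  assumes nontrivial: "\<exists>x::'a. x \<noteq> 0"
begin

lemma effect_numrange_bounds:
  assumes "A \<in> effects J"
  shows "0 \<le> numrange_inf A" and "numrange_sup A \<le> 1"
proof -
  have form: "0 \<le> inner x (A x)" "inner x (A x) \<le> inner x x" for x
    using assms unfolding effects_def by auto
  show "0 \<le> numrange_inf A"
    using form by (intro numrange_inf_greatest[OF nontrivial]) auto
  show "numrange_sup A \<le> 1"
  proof (rule numrange_sup_least[OF nontrivial])
    show "inner x (A x) \<le> 1" if "norm x = 1" for x
      using form(2)[of x] that by (simp add: power2_norm_eq_inner[symmetric])
  qed
qed

lemma specmin_effect:
  assumes "A \<in> effects J"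
  shows "specmin J A = numrange_inf A"
  unfolding specmin_def rspectrum_eq_real_spectrum
  using real_spectrum_subset_numrange[OF nontrivial, of A]
    numrange_inf_in_real_spectrum[OF effect_symmetric_op[OF assms] nontrivial]
  by (intro cInf_eq_minimum) auto

lemma specmax_effect:
  assumes "A \<in> effects J"
  shows "specmax J A = numrange_sup A"
  unfolding specmax_def rspectrum_eq_real_spectrum
  using real_spectrum_subset_numrange[OF nontrivial, of A]
    numrange_sup_in_real_spectrum[OF effect_symmetric_op[OF assms] nontrivial]
  by (intro cSup_eq_maximum) auto

lemma effect_spectrum_bounds:
  assumes "A \<in> effects J"
  shows "0 \<le> specmin J A" and "specmin J A \<le> specmax J A" and "specmax J A \<le> 1"
    and "real_spectrum A \<subseteq> {specmin J A..specmax J A}"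
    and "specmin J A \<in> real_spectrum A" and "specmax J A \<in> real_spectrum A"
  using effect_numrange_bounds[OF assms] numrange_inf_le_sup[OF nontrivial, of A]
    real_spectrum_subset_numrange[OF nontrivial, of A]
    numrange_inf_in_real_spectrum[OF effect_symmetric_op[OF assms] nontrivial]
    numrange_sup_in_real_spectrum[OF effect_symmetric_op[OF assms] nontrivial]
  by (simp_all add: specmin_effect[OF assms] specmax_effect[OF assms])

lemma spectral_bounds_effect:
  assumes "A \<in> effects J"
  shows "spectral_bounds (specmax J A) (specmin J A) (delta J A)"
proof
  note bounds = effect_spectrum_bounds[OF assms]
  show "0 \<le> specmin J A" "specmin J A \<le> specmax J A" "specmax J A \<le> 1"
    by (fact bounds)+
  show "0 \<le> delta J A"
    using bounds by (intro delta_greatest) auto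
  have "delta J A \<le> (specmax J A - a0 J A)\<^sup>2"
    by (rule delta_le[OF bounds(6)])
  then show "delta J A \<le> (specmax J A - specmin J A)\<^sup>2 / 4"
    by (simp add: a0_def power2_eq_square field_simps)
qed

lemma specmax_lipschitz:
  "A \<in> effects J \<Longrightarrow> B \<in> effects J \<Longrightarrow> \<bar>specmax J A - specmax J B\<bar> \<le> norm (A - B)"
  using numrange_sup_lipschitz[OF nontrivial] by (simp add: specmax_effect)

lemma specmin_lipschitz:
  "A \<in> effects J \<Longrightarrow> B \<in> effects J \<Longrightarrow> \<bar>specmin J A - specmin J B\<bar> \<le> norm (A - B)"
  using numrange_inf_lipschitz[OF nontrivial] by (simp add: specmin_effect)

lemma effect_spectrum_near_a0:
  assumes "A \<in> effects J" and "t \<in> real_spectrum A"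
  shows "\<bar>t - a0 J A\<bar> \<le> 1"
proof -
  note bounds = effect_spectrum_bounds[OF assms(1)]
  have "specmin J A \<le> t" "t \<le> specmax J A"
    using bounds(4) assms(2) by auto
  then show ?thesis
    using bounds(1-3) by (auto simp: a0_def abs_le_iff field_simps)
qed

text \<open>Spectra and centres \<open>a\<^sub>0\<close> of nearby effects are \<open>\<parallel>A - B\<parallel>\<close>-close, and \<open>u\<^sup>2 - v\<^sup>2 \<le> 2\<bar>u - v\<bar>\<close>
  on \<open>[-1, 1]\<close> turns this into the constant \<open>4\<close>.\<close>

lemma delta_le_delta_add:
  assumes A: "A \<in> effects J" and B: "B \<in> effects J"
  shows "delta J A \<le> delta J B + 4 * norm (A - B)"
proof (rule field_le_epsilon)
  fix e :: real assume "e > 0"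
  let ?n = "norm (A - B)"
  have a0_close: "\<bar>a0 J A - a0 J B\<bar> \<le> ?n"
    using specmax_lipschitz[OF A B] specmin_lipschitz[OF A B] by (auto simp: a0_def abs_le_iff field_simps)
  have "delta J A - 2 * (2 * ?n + e / 2) \<le> delta J B"
  proof (rule delta_greatest)
    show "real_spectrum B \<noteq> {}" using effect_spectrum_bounds[OF B] by auto
    fix t assume t: "t \<in> real_spectrum B"
    obtain \<mu> where \<mu>: "\<mu> \<in> real_spectrum A" "\<bar>t - \<mu>\<bar> < ?n + e / 2"
      using real_spectrum_perturbation[OF effect_symmetric_op[OF A] effect_symmetric_op[OF B]
          nontrivial t, of "?n + e / 2"] \<open>e > 0\<close>
      by auto
    have "delta J A \<le> (\<mu> - a0 J A)\<^sup>2" by (rule delta_le[OF \<mu>(1)])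
    also have "\<dots> \<le> (t - a0 J B)\<^sup>2 + 2 * \<bar>(\<mu> - a0 J A) - (t - a0 J B)\<bar>"
      by (rule square_le_square_add_abs_diff)
         (rule effect_spectrum_near_a0[OF A \<mu>(1)], rule effect_spectrum_near_a0[OF B t])
    also have "\<dots> \<le> (t - a0 J B)\<^sup>2 + 2 * (2 * ?n + e / 2)"
      using \<mu>(2) a0_close by (smt (verit))
    finally show "delta J A - 2 * (2 * ?n + e / 2) \<le> (t - a0 J B)\<^sup>2" by simp
  qed
  then show "delta J A \<le> delta J B + 4 * ?n + e" by simp
qed

lemma continuous_on_specmax: "continuous_on (effects J) (specmax J)"
  by (rule lipschitz_on_continuous_on[where L = 1], rule lipschitz_onI)
     (simp_all add: dist_real_def dist_norm specmax_lipschitz)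

lemma continuous_on_specmin: "continuous_on (effects J) (specmin J)"
  by (rule lipschitz_on_continuous_on[where L = 1], rule lipschitz_onI)
     (simp_all add: dist_real_def dist_norm specmin_lipschitz)

lemma continuous_on_delta: "continuous_on (effects J) (delta J)"
proof (rule lipschitz_on_continuous_on[where L = 4], rule lipschitz_onI)
  fix A B assume "A \<in> effects J" "B \<in> effects J"
  then show "dist (delta J A) (delta J B) \<le> 4 * dist A B"
    using delta_le_delta_add[of A B] delta_le_delta_add[of B A]
    by (simp add: dist_real_def dist_norm norm_minus_commute abs_le_iff)
qed simp

lemma specmax_complement:
  assumes "A \<in> effects J"
  shows "specmax J (id_blinfun - A) = 1 - specmin J A"
  unfolding specmax_def rspectrum_eq_real_spectrum real_spectrum_complement
  using effect_spectrum_bounds[OF assms] by (intro cSup_eq_maximum) auto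

lemma specmin_complement:
  assumes "A \<in> effects J"
  shows "specmin J (id_blinfun - A) = 1 - specmax J A"
  unfolding specmin_def rspectrum_eq_real_spectrum real_spectrum_complement
  using effect_spectrum_bounds[OF assms] by (intro cInf_eq_minimum) auto

lemma delta_complement:
  assumes "A \<in> effects J"
  shows "delta J (id_blinfun - A) = delta J A"
proof -
  have "a0 J (id_blinfun - A) = 1 - a0 J A"
    by (simp add: a0_def specmax_complement[OF assms] specmin_complement[OF assms] field_simps)
  then have "(\<lambda>t. (t - a0 J (id_blinfun - A))\<^sup>2) \<circ> (\<lambda>t. 1 - t) = (\<lambda>t. (t - a0 J A)\<^sup>2)"
    by (simp add: fun_eq_iff power2_commute)
  then show ?thesis
    unfolding delta_def rspectrum_eq_real_spectrum real_spectrum_complement image_comp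
    by simp
qed

lemma effect_eq_scaleR_id_iff:
  assumes "A \<in> effects J"
  shows "A = l *\<^sub>R id_blinfun \<longleftrightarrow> specmax J A = l \<and> specmin J A = l"
  using numrange_scaleR_id[OF nontrivial, of l]
    symmetric_op_numrange_inf_eq_sup[OF effect_symmetric_op[OF assms]]
  by (auto simp: specmax_effect[OF assms] specmin_effect[OF assms])

lemma trivial_effect_iff:
  assumes "A \<in> effects J"
  shows "trivial_effect A \<longleftrightarrow> specmax J A = specmin J A"
  using effect_eq_scaleR_id_iff[OF assms] effect_spectrum_bounds[OF assms]
  unfolding trivial_effect_def by (metis order_trans)

lemma nontrivial_projection_iff:
  assumes A: "A \<in> effects J"
  shows "nontrivial_projection J A \<longleftrightarrow> specmax J A = 1 \<and> specmin J A = 0 \<and> delta J A = 1/4"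
proof
  assume "nontrivial_projection J A"
  then have spec: "real_spectrum A = {0, 1}"
    unfolding nontrivial_projection_def using real_spectrum_projection by blast
  have "specmax J A = 1" "specmin J A = 0"
    unfolding specmax_def specmin_def rspectrum_eq_real_spectrum spec
    by (auto intro: cSup_eq_maximum cInf_eq_minimum)
  moreover from this have "delta J A = 1/4"
    unfolding delta_def rspectrum_eq_real_spectrum spec a0_def by (simp add: power2_eq_square)
  ultimately show "specmax J A = 1 \<and> specmin J A = 0 \<and> delta J A = 1/4" by simp
next
  assume data: "specmax J A = 1 \<and> specmin J A = 0 \<and> delta J A = 1/4"
  have "real_spectrum A \<subseteq> {0, 1}"
  proof
    fix t assume t: "t \<in> real_spectrum A"
    then have "0 \<le> t" "t \<le> 1"
      using effect_spectrum_bounds(4)[OF A] data by auto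
    moreover have "1/4 \<le> (t - 1/2)\<^sup>2"
      using delta_le[OF t, of J] data by (simp add: a0_def)
    then have "t * (1 - t) \<le> 0"
      by (simp add: power2_eq_square field_simps)
    ultimately show "t \<in> {0, 1}"
      by (auto simp: mult_le_0_iff)
  qed
  then have "A o\<^sub>L A = A"
    by (rule idempotent_if_real_spectrum_subset_01[OF effect_symmetric_op[OF A] nontrivial])
  moreover have "A \<noteq> 0" "A \<noteq> id_blinfun"
    using effect_eq_scaleR_id_iff[OF A, of 0] effect_eq_scaleR_id_iff[OF A, of 1] data by auto
  moreover have "selfadjoint J A"
    using A unfolding effects_def by auto
  ultimately show "nontrivial_projection J A"
    unfolding nontrivial_projection_def by simp
qed

lemma unsharpness_measure_F5: "unsharpness_measure J (F5 J)"
  unfolding unsharpness_measure_def sharpness_measure_def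
proof (intro conjI ballI)
  fix A assume A: "A \<in> effects J"
  interpret spectral_bounds "specmax J A" "specmin J A" "delta J A"
    by (rule spectral_bounds_effect[OF A])
  show "0 \<le> 1 - F5 J A" "1 - F5 J A \<le> 1"
    using F5_of_bounds by (simp_all add: F5_eq_F5_of)
  show "1 - F5 J A = 0 \<longleftrightarrow> trivial_effect A"
    using F5_of_eq_1_iff trivial_effect_iff[OF A] by (simp add: F5_eq_F5_of)
  show "1 - F5 J A = 1 \<longleftrightarrow> nontrivial_projection J A"
    using F5_of_eq_0_iff nontrivial_projection_iff[OF A] by (simp add: F5_eq_F5_of)
  show "1 - F5 J (id_blinfun - A) = 1 - F5 J A"
    by (simp add: F5_eq_F5_of specmax_complement[OF A] specmin_complement[OF A]
        delta_complement[OF A] F5_of_reflect)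
next
  show "similarity_invariant J (\<lambda>A. 1 - F5 J A)"
    by (rule similarity_invariantI) (metis F5_cong_real_spectrum)
next
  show "continuous_on (effects J) (\<lambda>A. 1 - F5 J A)"
    unfolding F5_eq_F5_of F5_of_def Let_def
    using continuous_on_specmax continuous_on_specmin
      continuous_on_delta
    by (intro continuous_intros) auto
qed

lemma bias_measure_B5: "bias_measure J (B5 J)"
  unfolding bias_measure_def
proof (intro conjI ballI)
  fix A assume A: "A \<in> effects J"
  interpret spectral_bounds "specmax J A" "specmin J A" "delta J A"
    by (rule spectral_bounds_effect[OF A])
  show "-1 \<le> B5 J A" "B5 J A \<le> 1"
    using B5_of_bounds by (simp_all add: B5_eq_B5_of)
  show "B5 J A = 0 \<longleftrightarrow> (specmax J A + specmin J A) / 2 = 1 / 2"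
    using B5_of_eq_0_iff by (simp add: B5_eq_B5_of)
  show "B5 J A = 1 \<longleftrightarrow> A = id_blinfun"
    using B5_of_eq_1_iff effect_eq_scaleR_id_iff[OF A, of 1] by (simp add: B5_eq_B5_of)
  show "B5 J A = -1 \<longleftrightarrow> A = 0"
    using B5_of_eq_minus_1_iff effect_eq_scaleR_id_iff[OF A, of 0] by (simp add: B5_eq_B5_of)
  show "B5 J (id_blinfun - A) = - B5 J A"
    by (simp add: B5_eq_B5_of specmax_complement[OF A] specmin_complement[OF A]
        delta_complement[OF A] B5_of_reflect)
next
  show "similarity_invariant J (B5 J)"
    by (rule similarity_invariantI) (metis B5_cong_real_spectrum)
next
  show "continuous_on (effects J) (B5 J)"
    unfolding B5_eq_B5_of B5_of_def Let_def
    using continuous_on_specmax continuous_on_specmin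
      continuous_on_delta
    by (intro continuous_intros) auto
qed

end

theorem mainTheorem12:
  fixes J :: "'a::{real_inner, complete_space, second_countable_topology} \<Rightarrow>\<^sub>L 'a"
  assumes "complex_structure J"
    and "\<exists>x::'a. x \<noteq> 0"
  shows "unsharpness_measure J (F5 J) \<and> bias_measure J (B5 J)"
  using unsharpness_measure_F5[OF assms(2)] bias_measure_B5[OF assms(2)] by simp

end
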